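(* For $n\ge1$ and even $h\ge0$, the number of unlabelled unicellular $n$-vertex maps in the orientable surface $\mathbf S_{h/2}$ is at most $2^{4n+3h}h^h$.
   Context: A map is a connected pseudograph (loops and multiple edges allowed) cellularly embedded in a surface, considered unlabelled and unrooted; it is unicellular if it has exactly one face. $\mathbf S_k$ is the orientable surface with $k$ handles (Euler genus $2k$). Convention $0^0=1$. *)

theory Defs
  imports "HOL-Combinatorics.Permutations"
begin

text \<open>Combinatorial maps on orientable surfaces, encoded as rotation systems.
A map with D darts (darts 0..<D) is a triple (D, s, a): s is the vertex rotation
(a permutation of the darts), a is the edge involution (fixed-point-free involution).
Vertices = orbits of s, edges = orbits of a, faces = orbits of s o a.
The map with one vertex and no edges is represented by D = 0, for which
we set the vertex and face counts to 1 by convention.\<close>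

type_synonym rmap = "nat \<times> (nat \<Rightarrow> nat) \<times> (nat \<Rightarrow> nat)"

definition darts :: "rmap \<Rightarrow> nat set" where
  "darts M = {..<fst M}"

definition vrot :: "rmap \<Rightarrow> nat \<Rightarrow> nat" where
  "vrot M = fst (snd M)"

definition einv :: "rmap \<Rightarrow> nat \<Rightarrow> nat" where
  "einv M = snd (snd M)"

definition is_rmap :: "rmap \<Rightarrow> bool" where
  "is_rmap M \<longleftrightarrow>
     vrot M permutes darts M \<and> einv M permutes darts M \<and>
     (\<forall>x\<in>darts M. einv M x \<noteq> x \<and> einv M (einv M x) = x) \<and>
     \<comment> \<open>connectedness: the group generated by s and a acts transitively\<close>
     (\<forall>x\<in>darts M. \<forall>y\<in>darts M.
        (x, y) \<in> ({(z, vrot M z) | z. z \<in> darts M} \<union> {(z, einv M z) | z. z \<in> darts M})\<^sup>*)"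

definition num_orbits :: "nat set \<Rightarrow> (nat \<Rightarrow> nat) \<Rightarrow> nat" where
  "num_orbits S f = card (S // {(x, y). x \<in> S \<and> y \<in> S \<and> (x, y) \<in> {(z, f z) | z. z \<in> S}\<^sup>*})"

definition num_vertices :: "rmap \<Rightarrow> nat" where
  "num_vertices M = (if fst M = 0 then 1 else num_orbits (darts M) (vrot M))"

definition num_edges :: "rmap \<Rightarrow> nat" where
  "num_edges M = fst M div 2"

definition num_faces :: "rmap \<Rightarrow> nat" where
  "num_faces M = (if fst M = 0 then 1 else num_orbits (darts M) (vrot M \<circ> einv M))"

definition euler_genus :: "rmap \<Rightarrow> int" where
  "euler_genus M = 2 - (int (num_vertices M) - int (num_edges M) + int (num_faces M))"

text \<open>Isomorphism of unlabelled unrooted maps: a relabelling of darts carrying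
one rotation system to the other, or to its mirror image (s^-1, a).\<close>
definition map_iso :: "rmap \<Rightarrow> rmap \<Rightarrow> bool" where
  "map_iso M M' \<longleftrightarrow> fst M = fst M' \<and>
     (\<exists>p. p permutes darts M \<and> (\<forall>x\<in>darts M. p (einv M x) = einv M' (p x)) \<and>
        ((\<forall>x\<in>darts M. p (vrot M x) = vrot M' (p x)) \<or>
         (\<forall>x\<in>darts M. vrot M' (p (vrot M x)) = p x)))"

definition unicellular_maps :: "nat \<Rightarrow> nat \<Rightarrow> rmap set" where
  "unicellular_maps n h = {M. is_rmap M \<and> num_vertices M = n \<and> num_faces M = 1 \<and>
                               euler_genus M = int h}"

definition num_unicellular_maps :: "nat \<Rightarrow> nat \<Rightarrow> nat" where
  "num_unicellular_maps n h =
     card (unicellular_maps n h //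
           {(M, M'). M \<in> unicellular_maps n h \<and> M' \<in> unicellular_maps n h \<and> map_iso M M'})"

end

theory Submission
  imports Defs "HOL-Combinatorics.Orbits"
begin

text \<open>Grow a spanning tree of the map one vertex at a time, keeping the boundary walk of the tree
  as a list of the darts met so far: a new vertex is spliced into the walk right after the dart
  whose edge reaches it. Once the walk contains every dart, number the darts by their position on
  it. The map is then determined up to isomorphism by the set \<open>P\<close> of positions of the \<open>2h\<close> darts
  off the tree, the edge involution on \<open>P\<close>, and the tree edges, which form a noncrossing matching
  of the other positions and are therefore determined by the positions at which an edge opens.
  With \<open>D = 2(n + h - 1)\<close> darts (Euler's formula for one face) this leaves at most
  \<open>2^D 2^(D - 2h) (2h)^h = 2^(4n + 3h - 4) h^h\<close> maps.\<close>

section \<open>Fixed-point-free involutions and noncrossing matchings\<close>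

definition fpf_involution_on :: "'a set \<Rightarrow> ('a \<Rightarrow> 'a) \<Rightarrow> bool" where
  "fpf_involution_on S f \<longleftrightarrow> (\<forall>x\<in>S. f x \<in> S \<and> f x \<noteq> x \<and> f (f x) = x)"

lemma fpf_involution_on_Diff_pair:
  assumes "fpf_involution_on S f" and "x \<in> S"
  shows "fpf_involution_on (S - {x, f x}) f"
  using assms unfolding fpf_involution_on_def by (auto, metis+)

lemma even_card_fpf_involution_on:
  "finite S \<Longrightarrow> fpf_involution_on S f \<Longrightarrow> even (card S)"
proof (induction "card S" arbitrary: S rule: less_induct)
  case less
  show ?case
  proof (cases "S = {}")
    case False
    then obtain x where x: "x \<in> S" by auto
    have fx: "f x \<in> S" "f x \<noteq> x" using less.prems(2) x unfolding fpf_involution_on_def by auto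
    have card: "card (S - {x, f x}) = card S - 2" and two: "2 \<le> card S"
      using x fx less.prems(1) card_mono[of S "{x, f x}"] by (auto simp: card_Diff_subset)
    have "even (card (S - {x, f x}))"
      using less.hyps[of "S - {x, f x}"] less.prems card two
        fpf_involution_on_Diff_pair[OF less.prems(2) x] by simp
    then show ?thesis using card two by (metis add_diff_inverse_nat even_add even_numeral not_le)
  qed simp
qed

definition fpf_involutions :: "'a set \<Rightarrow> ('a \<Rightarrow> 'a) set" where
  "fpf_involutions S = {g. fpf_involution_on S g \<and> (\<forall>x. x \<notin> S \<longrightarrow> g x = x)}"

lemma finite_fpf_involutions:
  assumes "finite S" shows "finite (fpf_involutions S)"
proof (rule finite_imageD)
  have "(\<lambda>g. restrict g S) ` fpf_involutions S \<subseteq> S \<rightarrow>\<^sub>E S"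
    unfolding fpf_involutions_def fpf_involution_on_def by auto
  then show "finite ((\<lambda>g. restrict g S) ` fpf_involutions S)"
    using assms by (simp add: finite_PiE finite_subset)
  show "inj_on (\<lambda>g. restrict g S) (fpf_involutions S)"
  proof (rule inj_onI)
    fix g g' assume "g \<in> fpf_involutions S" "g' \<in> fpf_involutions S" "restrict g S = restrict g' S"
    then show "g = g'"
      unfolding fpf_involutions_def fun_eq_iff restrict_def by (simp split: if_splits) metis
  qed
qed

lemma fpf_involutions_subset_swap_image:
  assumes "x \<in> S"
  shows "fpf_involutions S \<subseteq>
    (\<lambda>(y, g). g(x := y, y := x)) ` (SIGMA y:S - {x}. fpf_involutions (S - {x, y}))"
proof
  fix g assume g: "g \<in> fpf_involutions S"
  define y where "y = g x"
  have y: "y \<in> S - {x}" "g y = x"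
    using g assms unfolding fpf_involutions_def fpf_involution_on_def y_def by auto
  define g' where "g' = (\<lambda>i. if i = x \<or> i = y then i else g i)"
  have "g' \<in> fpf_involutions (S - {x, y})"
    using fpf_involution_on_Diff_pair[of S g x] g assms
    unfolding fpf_involutions_def g'_def y_def fpf_involution_on_def by auto
  moreover have "g = g'(x := y, y := x)" unfolding g'_def using y y_def by (simp add: fun_eq_iff)
  ultimately show "g \<in> (\<lambda>(y, g). g(x := y, y := x)) ` (SIGMA y:S - {x}. fpf_involutions (S - {x, y}))"
    using y by (intro image_eqI[of _ _ "(y, g')"]) auto
qed

lemma card_fpf_involutions_le:
  "finite S \<Longrightarrow> card (fpf_involutions S) \<le> card S ^ (card S div 2)"
proof (induction "card S" arbitrary: S rule: less_induct)
  case less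
  show ?case
  proof (cases "S = {}")
    case True
    then have "fpf_involutions S = {id}" unfolding fpf_involutions_def fpf_involution_on_def by auto
    then show ?thesis using True by simp
  next
    case False
    then obtain x where x: "x \<in> S" by auto
    define c where "c = card S"
    have c1: "1 \<le> c" using x less.prems c_def by (metis One_nat_def Suc_leI card_gt_0_iff empty_iff)
    define SG where "SG = (SIGMA y:S - {x}. fpf_involutions (S - {x, y}))"
    have IH: "card (fpf_involutions (S - {x, y})) \<le> (c - 2) ^ ((c - 2) div 2)" if "y \<in> S - {x}" for y
    proof -
      have "card (S - {x, y}) = c - 2" using that x less.prems c_def by (auto simp: card_Diff_subset)
      then show ?thesis using less.hyps[of "S - {x, y}"] less.prems c1 c_def by simp
    qed
    have finSG: "finite SG" unfolding SG_def using less.prems by (simp add: finite_fpf_involutions)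
    have "card (fpf_involutions S) \<le> card SG"
      using fpf_involutions_subset_swap_image[OF x] finSG unfolding SG_def[symmetric]
      by (meson card_image_le card_mono finite_imageI order_trans)
    also have "\<dots> = (\<Sum>y\<in>S - {x}. card (fpf_involutions (S - {x, y})))"
      unfolding SG_def using less.prems by (simp add: finite_fpf_involutions)
    also have "\<dots> \<le> (\<Sum>y\<in>S - {x}. (c - 2) ^ ((c - 2) div 2))"
      using IH by (rule sum_mono)
    also have "\<dots> = (c - 1) * (c - 2) ^ ((c - 2) div 2)"
      using x less.prems c_def by simp
    also have "\<dots> \<le> c ^ (c div 2)"
    proof (cases "c = 1")
      case False
      then have "c div 2 = Suc ((c - 2) div 2)" using c1 by (simp add: div_if)
      moreover have "(c - 1) * (c - 2) ^ ((c - 2) div 2) \<le> c * c ^ ((c - 2) div 2)"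
        by (intro mult_mono power_mono) auto
      ultimately show ?thesis by simp
    qed simp
    finally show ?thesis unfolding c_def .
  qed
qed

definition noncrossing_on :: "nat set \<Rightarrow> (nat \<Rightarrow> nat) \<Rightarrow> bool" where
  "noncrossing_on Q f \<longleftrightarrow> (\<forall>i\<in>Q. \<forall>j\<in>Q. i < j \<and> j < f i \<longrightarrow> i < f j \<and> f j < f i)"

lemma noncrossing_on_chord_eq:
  assumes inv: "fpf_involution_on Q b" and nc: "noncrossing_on Q b"
    and Q: "i \<in> Q" "k \<in> Q" and "i < k" and opener: "i < b i" and closer: "b k < k"
    and inside: "\<forall>c\<in>Q. i < c \<and> c < k \<longrightarrow> i < b c \<and> b c < k"
  shows "b i = k"
proof (rule ccontr)
  assume ne: "b i \<noteq> k"
  have bi: "b i \<in> Q" "b (b i) = i" and bk: "b k \<in> Q" "b (b k) = k"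
    using inv Q unfolding fpf_involution_on_def by auto
  have "\<not> b i < k" using inside bi opener by fastforce
  then have "k < b i" using ne by simp
  moreover have "b k \<noteq> i" using bi bk ne by auto
  moreover have "\<not> i < b k" using inside bk closer by fastforce
  ultimately have "b k < i \<and> i < b (b k) \<and> k < b i" using bk(2) \<open>i < k\<close> by simp
  then show False using nc bk bk(2) Q(1) unfolding noncrossing_on_def by fastforce
qed

lemma fpf_involution_on_eq_if_partner:
  assumes "fpf_involution_on Q a" and "fpf_involution_on Q b" and "c \<in> Q" and "b (a c) = c"
  shows "b c = a c"
proof -
  have "a c \<in> Q" using assms(1,3) unfolding fpf_involution_on_def by auto
  then show ?thesis using assms(2,4) unfolding fpf_involution_on_def by metis
qed

lemma noncrossing_involutions_eq_on_openers:
  assumes ia: "fpf_involution_on Q a" and ib: "fpf_involution_on Q b"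
    and na: "noncrossing_on Q a" and nb: "noncrossing_on Q b"
    and openers: "\<forall>i\<in>Q. i < a i \<longleftrightarrow> i < b i"
  shows "i \<in> Q \<Longrightarrow> i < a i \<Longrightarrow> b i = a i"
proof (induction "a i - i" arbitrary: i rule: less_induct)
  case less
  note i = less.prems
  have k: "a i \<in> Q" "a (a i) = i" "a i \<noteq> i" using ia i unfolding fpf_involution_on_def by auto
  have inside: "i < b c \<and> b c < a i" if c: "c \<in> Q" "i < c" "c < a i" for c
  proof -
    have ac: "i < a c \<and> a c < a i" "a c \<in> Q" "a (a c) = c" "a c \<noteq> c"
      using na i(1) c ia unfolding noncrossing_on_def fpf_involution_on_def by blast+
    have "b c = a c"
    proof (cases "c < a c")
      case True
      have "a c - c < a i - i" using ac(1) c by linarith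
      then show ?thesis using less.hyps c(1) True by blast
    next
      case False
      then have "a c < a (a c)" using ac(3,4) by simp
      moreover have "a (a c) - a c < a i - i" using ac c by linarith
      ultimately have "b (a c) = a (a c)" using less.hyps ac(2) by blast
      then have "b (a c) = c" using ac(3) by simp
      then show ?thesis using fpf_involution_on_eq_if_partner[OF ia ib c(1)] by blast
    qed
    then show ?thesis using ac by simp
  qed
  have "\<not> a i < b (a i)" using openers k(1,2) i(2) by auto
  moreover have "b (a i) \<noteq> a i" using ib k(1) unfolding fpf_involution_on_def by auto
  ultimately have "b (a i) < a i" by simp
  moreover have "i < b i" using openers i by blast
  ultimately show "b i = a i" using noncrossing_on_chord_eq[OF ib nb i(1) k(1)] i inside by blast
qed

lemma noncrossing_involutions_eqI:
  assumes ia: "fpf_involution_on Q a" and ib: "fpf_involution_on Q b"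
    and na: "noncrossing_on Q a" and nb: "noncrossing_on Q b"
    and openers: "\<forall>i\<in>Q. i < a i \<longleftrightarrow> i < b i"
  shows "\<forall>i\<in>Q. a i = b i"
proof
  fix i assume i: "i \<in> Q"
  note on_openers = noncrossing_involutions_eq_on_openers[OF assms]
  have ai: "a i \<in> Q" "a (a i) = i" "a i \<noteq> i" using ia i unfolding fpf_involution_on_def by auto
  show "a i = b i"
  proof (cases "i < a i")
    case True
    then show ?thesis using on_openers i by simp
  next
    case False
    then have "b (a i) = i" using on_openers[of "a i"] ai by simp
    then show ?thesis using fpf_involution_on_eq_if_partner[OF ia ib i] by simp
  qed
qed

lemma fpf_involution_on_Diff_closed:
  assumes "fpf_involution_on S f" and "\<forall>x\<in>P. f x \<in> P"
  shows "fpf_involution_on (S - P) f"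
  using assms unfolding fpf_involution_on_def by (metis Diff_iff)

text \<open>Codes of maps with \<open>D\<close> darts: positions \<open>0, \<dots>, D - 1\<close> stand for the darts along the
  boundary walk of a spanning tree, \<open>\<alpha>\<close> maps each position to the position of its edge partner,
  and \<open>P\<close> is the set of positions of darts not on the tree. The tree edges form a noncrossing
  matching of the remaining positions.\<close>

definition chord_codes :: "nat \<Rightarrow> nat \<Rightarrow> ((nat \<Rightarrow> nat) \<times> nat set) set" where
  "chord_codes D k = {(\<alpha>, P). P \<subseteq> {..<D} \<and> card P = k \<and> fpf_involution_on {..<D} \<alpha> \<and>
      (\<forall>i. D \<le> i \<longrightarrow> \<alpha> i = i) \<and> (\<forall>i\<in>P. \<alpha> i \<in> P) \<and> noncrossing_on ({..<D} - P) \<alpha>}"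

lemma chord_codes_eqI:
  assumes c: "(\<alpha>, P) \<in> chord_codes D k" "(\<beta>, P) \<in> chord_codes D k"
    and on_P: "\<forall>i\<in>P. \<alpha> i = \<beta> i"
    and openers: "\<forall>i\<in>{..<D} - P. i < \<alpha> i \<longleftrightarrow> i < \<beta> i"
  shows "\<alpha> = \<beta>"
proof
  fix i
  have "\<forall>i\<in>{..<D} - P. \<alpha> i = \<beta> i"
    using noncrossing_involutions_eqI[OF fpf_involution_on_Diff_closed fpf_involution_on_Diff_closed]
      c openers unfolding chord_codes_def by auto
  then show "\<alpha> i = \<beta> i" using c on_P unfolding chord_codes_def by (cases "i < D") auto
qed

lemma finite_chord_codes: "finite (chord_codes D k)"
proof (rule finite_subset)
  show "chord_codes D k \<subseteq> fpf_involutions {..<D} \<times> Pow {..<D}"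
    unfolding chord_codes_def fpf_involutions_def by auto
  show "finite (fpf_involutions {..<D} \<times> Pow {..<D})" by (simp add: finite_fpf_involutions)
qed

fun chord_code_summary :: "nat \<Rightarrow> (nat \<Rightarrow> nat) \<times> nat set \<Rightarrow> nat set \<times> nat set \<times> (nat \<Rightarrow> nat)" where
  "chord_code_summary D (\<alpha>, P) = (P, {i \<in> {..<D} - P. i < \<alpha> i}, \<lambda>i. if i \<in> P then \<alpha> i else i)"

lemma inj_on_chord_code_summary: "inj_on (chord_code_summary D) (chord_codes D k)"
proof (rule inj_onI)
  fix x y assume x: "x \<in> chord_codes D k" and y: "y \<in> chord_codes D k"
    and e: "chord_code_summary D x = chord_code_summary D y"
  obtain \<alpha> P \<beta> Q where xy: "x = (\<alpha>, P)" "y = (\<beta>, Q)" by fastforce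
  have PQ: "P = Q" using e unfolding xy by simp
  have openers: "{i \<in> {..<D} - P. i < \<alpha> i} = {i \<in> {..<D} - P. i < \<beta> i}"
    and on_P: "(\<lambda>i. if i \<in> P then \<alpha> i else i) = (\<lambda>i. if i \<in> P then \<beta> i else i)"
    using e unfolding xy PQ by simp_all
  have "\<forall>i\<in>P. \<alpha> i = \<beta> i" using fun_cong[OF on_P] by (metis (full_types))
  moreover have "\<forall>i\<in>{..<D} - P. i < \<alpha> i \<longleftrightarrow> i < \<beta> i" using openers by blast
  ultimately have "\<alpha> = \<beta>" using chord_codes_eqI x y unfolding xy PQ by blast
  then show "x = y" using xy PQ by simp
qed

lemma chord_code_summary_image:
  "chord_code_summary D ` chord_codes D k \<subseteq>
     (SIGMA P:{P. P \<subseteq> {..<D} \<and> card P = k}. Pow ({..<D} - P) \<times> fpf_involutions P)"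
  unfolding chord_codes_def fpf_involutions_def fpf_involution_on_def by auto

lemma card_chord_codes_le: "card (chord_codes D k) \<le> 2 ^ D * 2 ^ (D - k) * k ^ (k div 2)"
proof -
  define Ps where "Ps = {P. P \<subseteq> {..<D} \<and> card P = k}"
  have finPs: "finite Ps" unfolding Ps_def by (rule finite_subset[of _ "Pow {..<D}"]) auto
  have finP: "finite P" and cardP: "card P = k" and subP: "P \<subseteq> {..<D}" if "P \<in> Ps" for P
    using that unfolding Ps_def by (auto intro: finite_subset)
  have "finite (SIGMA P:Ps. Pow ({..<D} - P) \<times> fpf_involutions P)"
    using finPs finP by (simp add: finite_fpf_involutions)
  then have "card (chord_codes D k) \<le> card (SIGMA P:Ps. Pow ({..<D} - P) \<times> fpf_involutions P)"
    by (rule card_inj_on_le[OF inj_on_chord_code_summary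
          chord_code_summary_image[of D k, folded Ps_def]])
  also have "\<dots> = (\<Sum>P\<in>Ps. card (Pow ({..<D} - P)) * card (fpf_involutions P))"
    using finPs finP by (simp add: finite_fpf_involutions card_cartesian_product)
  also have "\<dots> \<le> (\<Sum>P\<in>Ps. 2 ^ (D - k) * k ^ (k div 2))"
  proof (rule sum_mono)
    fix P assume P: "P \<in> Ps"
    have "card (Pow ({..<D} - P)) = 2 ^ (D - k)"
      using card_Diff_subset[OF finP[OF P] subP[OF P]] cardP[OF P] by (simp add: card_Pow)
    then show "card (Pow ({..<D} - P)) * card (fpf_involutions P) \<le> 2 ^ (D - k) * k ^ (k div 2)"
      using card_fpf_involutions_le[OF finP[OF P]] cardP[OF P] by simp
  qed
  also have "\<dots> = (D choose k) * (2 ^ (D - k) * k ^ (k div 2))"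
    unfolding Ps_def using n_subsets[of "{..<D}" k] by simp
  also have "\<dots> \<le> 2 ^ D * (2 ^ (D - k) * k ^ (k div 2))"
    using binomial_le_pow2 by (rule mult_right_mono) simp
  finally show ?thesis by (simp add: mult.assoc)
qed

section \<open>Walks along lists\<close>

definition index_of :: "'a list \<Rightarrow> 'a \<Rightarrow> nat" where
  "index_of L z = (THE i. i < length L \<and> L ! i = z)"

lemma index_of_nth: "distinct L \<Longrightarrow> i < length L \<Longrightarrow> index_of L (L ! i) = i"
  unfolding index_of_def by (rule the_equality) (auto simp: nth_eq_iff_index_eq)

lemma index_of_less: "z \<in> set L \<Longrightarrow> distinct L \<Longrightarrow> index_of L z < length L"
  and nth_index_of: "z \<in> set L \<Longrightarrow> distinct L \<Longrightarrow> L ! index_of L z = z"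
  by (metis in_set_conv_nth index_of_nth)+

definition insert_after :: "nat \<Rightarrow> 'a list \<Rightarrow> 'a list \<Rightarrow> 'a list" where
  "insert_after i V L = take (Suc i) L @ V @ drop (Suc i) L"

lemma length_insert_after: "i < length L \<Longrightarrow> length (insert_after i V L) = length L + length V"
  unfolding insert_after_def by simp

lemma set_insert_after: "set (insert_after i V L) = set L \<union> set V"
  unfolding insert_after_def by (metis Un_assoc Un_commute append_take_drop_id set_append)

lemma distinct_insert_after:
  assumes "distinct L" "distinct V" "set V \<inter> set L = {}"
  shows "distinct (insert_after i V L)"
proof -
  have "set (take (Suc i) L) \<inter> set (drop (Suc i) L) = {}"
    using assms(1) by (metis append_take_drop_id distinct_append)
  then show ?thesis using assms set_take_subset[of "Suc i" L] set_drop_subset[of "Suc i" L]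
    unfolding insert_after_def by auto
qed

lemma nth_insert_after:
  assumes "i < length L"
  shows "j \<le> i \<Longrightarrow> insert_after i V L ! j = L ! j"
    and "i < j \<Longrightarrow> j \<le> i + length V \<Longrightarrow> insert_after i V L ! j = V ! (j - Suc i)"
    and "i + length V < j \<Longrightarrow> j < length L + length V \<Longrightarrow> insert_after i V L ! j = L ! (j - length V)"
proof -
  have len: "length (take (Suc i) L) = Suc i" using assms by simp
  show "j \<le> i \<Longrightarrow> insert_after i V L ! j = L ! j"
    unfolding insert_after_def using len by (simp add: nth_append)
  show "i < j \<Longrightarrow> j \<le> i + length V \<Longrightarrow> insert_after i V L ! j = V ! (j - Suc i)"
    unfolding insert_after_def using len by (auto simp: nth_append)
  assume j: "i + length V < j" "j < length L + length V"
  then have "insert_after i V L ! j = drop (Suc i) L ! (j - Suc i - length V)"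
    unfolding insert_after_def using len by (auto simp: nth_append)
  also have "\<dots> = L ! (Suc i + (j - Suc i - length V))" using j assms by simp
  also have "Suc i + (j - Suc i - length V) = j - length V" using j by simp
  finally show "insert_after i V L ! j = L ! (j - length V)" .
qed

lemma index_of_insert_after:
  assumes i: "i < length L" and d: "distinct L" "distinct (insert_after i V L)" and z: "z \<in> set L"
  shows "index_of (insert_after i V L) z =
    (if index_of L z \<le> i then index_of L z else index_of L z + length V)"
proof -
  let ?p = "if index_of L z \<le> i then index_of L z else index_of L z + length V"
  have p: "index_of L z < length L" "L ! index_of L z = z"
    using index_of_less[OF z d(1)] nth_index_of[OF z d(1)] by auto
  have "?p < length (insert_after i V L)" using p length_insert_after[OF i] by simp
  then have "index_of (insert_after i V L) (insert_after i V L ! ?p) = ?p"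
    by (rule index_of_nth[OF d(2)])
  moreover have "insert_after i V L ! ?p = z" using nth_insert_after[OF i] p by simp
  ultimately show ?thesis by simp
qed

lemma index_of_insert_after_new:
  assumes i: "i < length L" and d: "distinct (insert_after i V L)" and k: "k < length V"
  shows "index_of (insert_after i V L) (V ! k) = Suc i + k"
proof -
  have "Suc i + k < length (insert_after i V L)" using length_insert_after[OF i] i k by simp
  then have "index_of (insert_after i V L) (insert_after i V L ! (Suc i + k)) = Suc i + k"
    by (rule index_of_nth[OF d])
  moreover have "insert_after i V L ! (Suc i + k) = V ! k" using nth_insert_after(2)[OF i] k by simp
  ultimately show ?thesis by simp
qed

definition cyclic_walk :: "('a \<Rightarrow> 'a) \<Rightarrow> 'a list \<Rightarrow> bool" where
  "cyclic_walk f L \<longleftrightarrow> (\<forall>j<length L. f (L ! j) = L ! (Suc j mod length L))"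

lemma cyclic_walk_insert_after:
  assumes walk: "cyclic_walk f L" and i: "i < length L" and V: "V \<noteq> []"
    and enter: "g (L ! i) = hd V" and leave: "g (last V) = f (L ! i)"
    and along: "\<forall>k. Suc k < length V \<longrightarrow> g (V ! k) = V ! Suc k"
    and same: "\<forall>j<length L. j \<noteq> i \<longrightarrow> g (L ! j) = f (L ! j)"
  shows "cyclic_walk g (insert_after i V L)"
  unfolding cyclic_walk_def
proof (intro allI impI)
  define n where "n = length L"
  define m where "m = length V"
  let ?L' = "insert_after i V L"
  have len': "length ?L' = n + m" using length_insert_after[OF i] n_def m_def by simp
  fix j assume "j < length ?L'"
  then have j: "j < n + m" using len' by simp
  have m: "0 < m" using V m_def by simp
  have step: "f (L ! p) = L ! (Suc p mod n)" if "p < n" for p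
    using walk that n_def unfolding cyclic_walk_def by simp
  note nth' = nth_insert_after[OF i, where V = V, folded m_def]
  consider (before) "j < i" | (at) "j = i" | (inside) "i < j" "j < i + m" | (exit) "j = i + m"
    | (after) "i + m < j" by linarith
  then show "g (?L' ! j) = ?L' ! (Suc j mod length ?L')"
  proof cases
    case before
    then have "Suc j mod length ?L' = Suc j" "Suc j mod n = Suc j" using i j len' n_def by auto
    then show ?thesis using same step[of j] nth'(1)[of j] nth'(1)[of "Suc j"] before i n_def by simp
  next
    case at
    then have "Suc j mod length ?L' = Suc i" using i m len' n_def by simp
    then show ?thesis using enter nth'(1)[of i] nth'(2)[of "Suc i"] m at by (simp add: hd_conv_nth V)
  next
    case inside
    then have "Suc j mod length ?L' = Suc j" using i j len' n_def by simp
    moreover have "Suc (j - Suc i) = Suc j - Suc i" using inside by simp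
    ultimately show ?thesis using along nth'(2)[of j] nth'(2)[of "Suc j"] inside m_def by simp
  next
    case exit
    have "?L' ! j = last V" using nth'(2)[of j] exit m V m_def by (simp add: last_conv_nth)
    then have "g (?L' ! j) = L ! (Suc i mod n)" using leave step i n_def by simp
    moreover have "?L' ! (Suc j mod (n + m)) = L ! (Suc i mod n)"
    proof (cases "Suc i < n")
      case True
      then show ?thesis using nth'(3)[of "Suc j"] exit n_def by simp
    next
      case False
      then have "Suc i = n" "Suc j = n + m" using i n_def exit by simp_all
      then have "Suc j mod (n + m) = 0" "Suc i mod n = 0" by simp_all
      then show ?thesis using nth'(1)[of 0] by simp
    qed
    ultimately show ?thesis using len' by simp
  next
    case after
    define p where "p = j - m"
    have p: "i < p" "p < n" "Suc j - m = Suc p" using after j p_def by auto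
    have "g (?L' ! j) = L ! (Suc p mod n)" using nth'(3)[of j] after j same step p p_def n_def by simp
    moreover have "?L' ! (Suc j mod (n + m)) = L ! (Suc p mod n)"
    proof (cases "Suc p < n")
      case True
      then show ?thesis using nth'(3)[of "Suc j"] after p n_def by simp
    next
      case False
      then have "Suc p = n" "Suc j = n + m" using p after p_def by auto
      then have "Suc j mod (n + m) = 0" "Suc p mod n = 0" by simp_all
      then show ?thesis using nth'(1)[of 0] by simp
    qed
    ultimately show ?thesis using len' by simp
  qed
qed

definition noncrossing_walk :: "('a \<Rightarrow> 'a) \<Rightarrow> 'a set \<Rightarrow> 'a list \<Rightarrow> bool" where
  "noncrossing_walk a T L \<longleftrightarrow> (\<forall>y\<in>T. \<forall>z\<in>T.
     index_of L y < index_of L z \<and> index_of L z < index_of L (a y) \<longrightarrow>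
     index_of L y < index_of L (a z) \<and> index_of L (a z) < index_of L (a y))"

lemma noncrossing_walk_insert_after:
  assumes nc: "noncrossing_walk a T L" and i: "i < length L"
    and d: "distinct L" "distinct (insert_after i V L)"
    and T: "T \<subseteq> set L" "\<forall>z\<in>T. a z \<in> T" and x: "L ! i \<notin> T"
    and V: "V \<noteq> []" and pair: "a (L ! i) = last V" "a (last V) = L ! i"
  shows "noncrossing_walk a (insert (L ! i) (insert (last V) T)) (insert_after i V L)"
  unfolding noncrossing_walk_def
proof (intro ballI impI)
  define m where "m = length V"
  define f where "f p = (if p \<le> i then p else p + m)" for p
  let ?p = "index_of L" and ?q = "index_of (insert_after i V L)"
  have mono: "f p < f p' \<longleftrightarrow> p < p'" for p p' unfolding f_def by auto
  have qT: "?q u = f (?p u)" "?q (a u) = f (?p (a u))" if "u \<in> T" for u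
    using index_of_insert_after[OF i d] that T unfolding f_def m_def by auto
  have band: "?q u < i \<or> i + m < ?q u" if "u \<in> T" for u
  proof -
    have "?p u \<noteq> i" using x that T nth_index_of[OF _ d(1), of u] by auto
    then show ?thesis using qT(1)[OF that] unfolding f_def by auto
  qed
  have qx: "?q (L ! i) = i" using index_of_insert_after[OF i d] index_of_nth[OF d(1) i] i by simp
  have qw: "?q (last V) = i + m"
    using index_of_insert_after_new[OF i d(2), of "m - 1"] V m_def by (simp add: last_conv_nth)
  fix y z assume y: "y \<in> insert (L ! i) (insert (last V) T)"
    and z: "z \<in> insert (L ! i) (insert (last V) T)"
    and yz: "?q y < ?q z \<and> ?q z < ?q (a y)"
  show "?q y < ?q (a z) \<and> ?q (a z) < ?q (a y)"
  proof (cases "y \<in> T")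
    case yT: True
    consider "z \<in> T" | "z = L ! i" | "z = last V" using z by blast
    then show ?thesis
    proof cases
      case 1
      then show ?thesis using nc yT yz qT[OF yT] qT[OF 1] mono unfolding noncrossing_walk_def by metis
    next
      case 2
      then show ?thesis using yz qx qw pair band[of "a y"] T(2) yT by force
    next
      case 3
      then show ?thesis using yz qx qw pair band[of y] yT by force
    qed
  next
    case False
    then have "y = L ! i \<or> y = last V" using y by blast
    moreover have "?q z \<le> i \<or> i + m \<le> ?q z" using z band qx qw by force
    ultimately show ?thesis using yz qx qw pair by force
  qed
qed

section \<open>Counting maps up to isomorphism\<close>

lemma rtrancl_step_iff_orbit:
  assumes p: "f permutes S" and "finite S" and x: "x \<in> S"
  shows "(x, y) \<in> {(z, f z) | z. z \<in> S}\<^sup>* \<longleftrightarrow> y \<in> orbit f x"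
proof
  have perm: "permutation f" using assms by (auto simp: permutation_permutes)
  assume "(x, y) \<in> {(z, f z) | z. z \<in> S}\<^sup>*"
  then show "y \<in> orbit f x"
  proof (induction rule: rtrancl_induct)
    case base
    then show ?case using perm by (rule permutation_self_in_orbit)
  next
    case (step u v)
    then have "v = f u" by blast
    then show ?case using orbit.step[OF step.IH] by simp
  qed
next
  have perm: "permutation f" using assms by (auto simp: permutation_permutes)
  assume "y \<in> orbit f x"
  then obtain k where k: "y = (f ^^ k) x" using orbit_altdef_permutation[OF perm] by auto
  have "(x, (f ^^ k) x) \<in> {(z, f z) | z. z \<in> S}\<^sup>*" for k
  proof (induction k)
    case (Suc k)
    have "(f ^^ k) x \<in> S" using x p by (induction k) (auto simp: permutes_in_image)
    then have "((f ^^ k) x, (f ^^ Suc k) x) \<in> {(z, f z) | z. z \<in> S}" by simp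
    then show ?case by (rule rtrancl_into_rtrancl[OF Suc.IH])
  qed simp
  then show "(x, y) \<in> {(z, f z) | z. z \<in> S}\<^sup>*" using k by simp
qed

lemma num_orbits_eq_card_orbits:
  assumes "f permutes S" and "finite S"
  shows "num_orbits S f = card (orbit f ` S)"
proof -
  let ?R = "{(x, y). x \<in> S \<and> y \<in> S \<and> (x, y) \<in> {(z, f z) | z. z \<in> S}\<^sup>*}"
  have "?R `` {x} = orbit f x" if x: "x \<in> S" for x
  proof -
    have "?R `` {x} = {y \<in> S. (x, y) \<in> {(z, f z) | z. z \<in> S}\<^sup>*}" using x by (auto simp: Image_def)
    also have "\<dots> = {y \<in> S. y \<in> orbit f x}" using rtrancl_step_iff_orbit[OF assms x] by simp
    also have "\<dots> = orbit f x" using permutes_orbit_subset[OF assms(1) x] by blast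
    finally show ?thesis .
  qed
  then have "S // ?R = orbit f ` S" unfolding quotient_def by auto
  then show ?thesis unfolding num_orbits_def by simp
qed

lemma map_iso_refl: "map_iso M M"
  unfolding map_iso_def by (intro conjI exI[of _ id]) auto

lemma inv_intertwines:
  assumes p: "p permutes A" and pf: "\<forall>x\<in>A. p (f x) = g (p x)"
  shows "\<forall>y\<in>A. inv p (g y) = f (inv p y)"
proof
  fix y assume "y \<in> A"
  then have "inv p y \<in> A" using permutes_inv[OF p] by (simp add: permutes_in_image)
  then have "p (f (inv p y)) = g y" using pf by (simp add: permutes_inverses[OF p])
  then show "inv p (g y) = f (inv p y)" by (metis permutes_inverses(2)[OF p])
qed

lemma inv_anti_intertwines:
  assumes p: "p permutes A" and f: "f permutes A" and pf: "\<forall>x\<in>A. g (p (f x)) = p x"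
  shows "\<forall>y\<in>A. f (inv p (g y)) = inv p y"
proof
  fix y assume "y \<in> A"
  define z where "z = inv f (inv p y)"
  have "z \<in> A" unfolding z_def using \<open>y \<in> A\<close> permutes_inv[OF p] permutes_inv[OF f]
    by (simp add: permutes_in_image)
  have fz: "f z = inv p y" unfolding z_def by (simp add: permutes_inverses[OF f])
  then have "g y = p z" using pf \<open>z \<in> A\<close> by (metis permutes_inverses(1)[OF p])
  then show "f (inv p (g y)) = inv p y" using fz by (simp add: permutes_inverses[OF p])
qed

lemma map_iso_sym:
  assumes "vrot M permutes darts M" and "map_iso M K"
  shows "map_iso K M"
proof -
  obtain p where same: "fst M = fst K" and p: "p permutes darts M"
    and pa: "\<forall>x\<in>darts M. p (einv M x) = einv K (p x)"
    and pv: "(\<forall>x\<in>darts M. p (vrot M x) = vrot K (p x)) \<or> (\<forall>x\<in>darts M. vrot K (p (vrot M x)) = p x)"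
    using assms(2) unfolding map_iso_def by blast
  have dK: "darts K = darts M" unfolding darts_def using same by simp
  have vr: "(\<forall>y\<in>darts M. inv p (vrot K y) = vrot M (inv p y)) \<or>
      (\<forall>y\<in>darts M. vrot M (inv p (vrot K y)) = inv p y)"
    using pv
  proof (elim disjE)
    assume "\<forall>x\<in>darts M. p (vrot M x) = vrot K (p x)"
    then show ?thesis using inv_intertwines[OF p] by blast
  next
    assume "\<forall>x\<in>darts M. vrot K (p (vrot M x)) = p x"
    then show ?thesis using inv_anti_intertwines[OF p assms(1)] by blast
  qed
  show ?thesis unfolding map_iso_def
  proof (intro conjI exI[of _ "inv p"])
    show "fst K = fst M" using same by simp
    show "inv p permutes darts K" using dK permutes_inv[OF p] by simp
    show "\<forall>x\<in>darts K. inv p (einv K x) = einv M (inv p x)" using dK inv_intertwines[OF p pa] by simp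
    show "(\<forall>x\<in>darts K. inv p (vrot K x) = vrot M (inv p x)) \<or>
        (\<forall>x\<in>darts K. vrot M (inv p (vrot K x)) = inv p x)" using dK vr by simp
  qed
qed

lemma intertwines_or_reverses_comp:
  assumes "\<forall>x\<in>A. p x \<in> B \<and> p (f x) \<in> B"
    and "(\<forall>x\<in>A. p (f x) = g (p x)) \<or> (\<forall>x\<in>A. g (p (f x)) = p x)"
    and "(\<forall>y\<in>B. q (g y) = h (q y)) \<or> (\<forall>y\<in>B. h (q (g y)) = q y)"
  shows "(\<forall>x\<in>A. q (p (f x)) = h (q (p x))) \<or> (\<forall>x\<in>A. h (q (p (f x))) = q (p x))"
  using assms(2)
proof (elim disjE)
  assume p_direct: "\<forall>x\<in>A. p (f x) = g (p x)"
  show ?thesis using assms(3)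
  proof (elim disjE)
    assume "\<forall>y\<in>B. q (g y) = h (q y)"
    then show ?thesis using p_direct assms(1) by simp
  next
    assume "\<forall>y\<in>B. h (q (g y)) = q y"
    then show ?thesis using p_direct assms(1) by simp
  qed
next
  assume p_reverse: "\<forall>x\<in>A. g (p (f x)) = p x"
  show ?thesis using assms(3)
  proof (elim disjE)
    assume q_direct: "\<forall>y\<in>B. q (g y) = h (q y)"
    have "h (q (p (f x))) = q (p x)" if "x \<in> A" for x
      using q_direct p_reverse assms(1) that by metis
    then show ?thesis by blast
  next
    assume q_reverse: "\<forall>y\<in>B. h (q (g y)) = q y"
    have "q (p (f x)) = h (q (p x))" if "x \<in> A" for x
      using q_reverse p_reverse assms(1) that by metis
    then show ?thesis by blast
  qed
qed

lemma map_iso_trans: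
  assumes "vrot M permutes darts M" and "map_iso M K" and "map_iso K N"
  shows "map_iso M N"
proof -
  obtain p where f1: "fst M = fst K" and p: "p permutes darts M"
    and pa: "\<forall>x\<in>darts M. p (einv M x) = einv K (p x)"
    and pv: "(\<forall>x\<in>darts M. p (vrot M x) = vrot K (p x)) \<or> (\<forall>x\<in>darts M. vrot K (p (vrot M x)) = p x)"
    using assms(2) unfolding map_iso_def by blast
  obtain q where f2: "fst K = fst N" and q: "q permutes darts K"
    and qa: "\<forall>x\<in>darts K. q (einv K x) = einv N (q x)"
    and qv: "(\<forall>x\<in>darts K. q (vrot K x) = vrot N (q x)) \<or> (\<forall>x\<in>darts K. vrot N (q (vrot K x)) = q x)"
    using assms(3) unfolding map_iso_def by blast
  have dK: "darts K = darts M" unfolding darts_def using f1 by simp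
  have pin: "p x \<in> darts K" and spin: "p (vrot M x) \<in> darts K" if "x \<in> darts M" for x
    using that p assms(1) dK by (simp_all add: permutes_in_image)
  have vr: "(\<forall>x\<in>darts M. q (p (vrot M x)) = vrot N (q (p x))) \<or>
        (\<forall>x\<in>darts M. vrot N (q (p (vrot M x))) = q (p x))"
    using intertwines_or_reverses_comp[OF _ pv qv] pin spin by blast
  show ?thesis unfolding map_iso_def
  proof (intro conjI exI[of _ "q \<circ> p"])
    show "fst M = fst N" using f1 f2 by simp
    show "(q \<circ> p) permutes darts M" using permutes_compose[OF p] q dK by simp
    show "\<forall>x\<in>darts M. (q \<circ> p) (einv M x) = einv N ((q \<circ> p) x)" using pa qa pin by simp
    show "(\<forall>x\<in>darts M. (q \<circ> p) (vrot M x) = vrot N ((q \<circ> p) x)) \<or>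
        (\<forall>x\<in>darts M. vrot N ((q \<circ> p) (vrot M x)) = (q \<circ> p) x)" using vr by simp
  qed
qed

lemma card_quotient_le_card:
  assumes eq: "equiv U R" and "finite X"
    and cover: "\<forall>u\<in>U. \<exists>x\<in>X. Q u x"
    and same: "\<And>u v x. u \<in> U \<Longrightarrow> v \<in> U \<Longrightarrow> Q u x \<Longrightarrow> Q v x \<Longrightarrow> (u, v) \<in> R"
  shows "card (U // R) \<le> card X"
proof -
  define code where "code C = (SOME x. x \<in> X \<and> (\<exists>u\<in>C. Q u x))" for C
  have code: "code C \<in> X \<and> (\<exists>u\<in>C. Q u (code C))" if "C \<in> U // R" for C
  proof -
    from that obtain u where "u \<in> U" "C = R `` {u}" by (rule quotientE)
    then have "u \<in> C" "u \<in> U" using equiv_class_self[OF eq] by auto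
    then have "\<exists>x. x \<in> X \<and> (\<exists>u\<in>C. Q u x)" using cover by blast
    then show ?thesis unfolding code_def by (rule someI_ex)
  qed
  have "inj_on code (U // R)"
  proof (rule inj_onI)
    fix C1 C2 assume C: "C1 \<in> U // R" "C2 \<in> U // R" and e: "code C1 = code C2"
    obtain u1 where u1: "u1 \<in> C1" "Q u1 (code C1)" using code[OF C(1)] by blast
    obtain u2 where u2: "u2 \<in> C2" "Q u2 (code C1)" using code[OF C(2)] e by auto
    have "u1 \<in> U" "u2 \<in> U" using u1(1) u2(1) in_quotient_imp_subset[OF eq] C by blast+
    then have "(u1, u2) \<in> R" using same u1(2) u2(2) by blast
    then show "C1 = C2" using quotient_eqI[OF eq C u1(1) u2(1)] by blast
  qed
  moreover have "code ` (U // R) \<subseteq> X" using code by blast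
  ultimately show ?thesis using card_inj_on_le \<open>finite X\<close> by blast
qed

lemma num_unicellular_maps_le_card:
  assumes "finite X" and "\<forall>M\<in>unicellular_maps n h. \<exists>x\<in>X. map_iso M (K x)"
  shows "num_unicellular_maps n h \<le> card X"
proof -
  let ?U = "unicellular_maps n h"
  let ?R = "{(M, M'). M \<in> ?U \<and> M' \<in> ?U \<and> map_iso M M'}"
  have perm: "vrot M permutes darts M" if "M \<in> ?U" for M
    using that unfolding unicellular_maps_def is_rmap_def by simp
  have eq: "equiv ?U ?R"
  proof (rule equivI)
    show "refl_on ?U ?R" unfolding refl_on_def using map_iso_refl by blast
    show "sym ?R" unfolding sym_def using map_iso_sym perm by blast
    show "trans ?R" unfolding trans_def using map_iso_trans perm by blast
  qed auto
  have same: "(M, M') \<in> ?R"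
    if "M \<in> ?U" "M' \<in> ?U" "map_iso M (K x)" "map_iso M' (K x)" for M M' x
  proof -
    have "map_iso (K x) M'" using map_iso_sym[OF perm[OF that(2)] that(4)] .
    then show ?thesis using map_iso_trans[OF perm[OF that(1)] that(3)] that(1,2) by simp
  qed
  show ?thesis unfolding num_unicellular_maps_def
    using card_quotient_le_card[OF eq assms same] .
qed

section \<open>Spanning plane trees of a map\<close>

locale rotation_system =
  fixes D :: nat and s a :: "nat \<Rightarrow> nat"
  assumes s_permutes: "s permutes {..<D}" and a_permutes: "a permutes {..<D}"
    and a_fpf_involution: "\<forall>x\<in>{..<D}. a x \<noteq> x \<and> a (a x) = x"
    and connected: "\<forall>x\<in>{..<D}. \<forall>y\<in>{..<D}.
        (x, y) \<in> ({(z, s z) | z. z \<in> {..<D}} \<union> {(z, a z) | z. z \<in> {..<D}})\<^sup>*"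
begin

lemma permutation_s: "permutation s"
  using s_permutes by (intro permutes_imp_permutation) auto

lemma a_less: "x < D \<Longrightarrow> a x < D"
  using permutes_in_image[OF a_permutes, of x] by simp

lemma orbit_subset_darts: "x < D \<Longrightarrow> orbit s x \<subseteq> {..<D}"
  using s_permutes by (intro permutes_orbit_subset) auto

lemma orbit_eq: "y \<in> orbit s x \<Longrightarrow> orbit s y = orbit s x"
  using cyclic_on_orbit'[OF permutation_s, of x] orbit_cyclic_eq3 by metis

lemma self_in_orbit: "x \<in> orbit s x"
  using permutation_s by (rule permutation_self_in_orbit)

definition vertex_degree :: "nat \<Rightarrow> nat" where
  "vertex_degree w = funpow_dist1 s w w"

lemma vertex_degree_pos: "0 < vertex_degree w"
  unfolding vertex_degree_def by simp

lemma funpow_vertex_degree: "(s ^^ vertex_degree w) w = w"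
  unfolding vertex_degree_def using funpow_dist1_prop[OF self_in_orbit] .

definition vertex_word :: "nat \<Rightarrow> nat list" where
  "vertex_word w = map (\<lambda>j. (s ^^ Suc j) w) [0..<vertex_degree w]"

lemma vertex_word_ne: "vertex_word w \<noteq> []"
  unfolding vertex_word_def using vertex_degree_pos by simp

lemma hd_vertex_word: "hd (vertex_word w) = s w"
  unfolding vertex_word_def using vertex_degree_pos[of w] by (simp add: hd_map)

lemma last_vertex_word: "last (vertex_word w) = w"
  unfolding vertex_word_def using vertex_degree_pos[of w] funpow_vertex_degree[of w]
  by (simp add: last_map del: funpow.simps)

lemma vertex_word_step:
  "Suc k < length (vertex_word w) \<Longrightarrow> s (vertex_word w ! k) = vertex_word w ! Suc k"
  unfolding vertex_word_def by simp

lemma distinct_vertex_word: "distinct (vertex_word w)"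
proof -
  have "inj_on (\<lambda>j. (s ^^ Suc j) w) {0..<vertex_degree w}"
  proof (rule inj_onI)
    fix i j assume ij: "i \<in> {0..<vertex_degree w}" "j \<in> {0..<vertex_degree w}"
      and "(s ^^ Suc i) w = (s ^^ Suc j) w"
    then have "(s ^^ i) w = (s ^^ j) w"
      using permutation_bijective[OF permutation_s] by (simp add: bij_def inj_eq)
    then show "i = j" using inj_on_funpow_dist1[OF self_in_orbit] ij
      unfolding vertex_degree_def by (meson inj_onD)
  qed
  then show ?thesis unfolding vertex_word_def by (simp add: distinct_map del: funpow.simps)
qed

lemma set_vertex_word: "set (vertex_word w) = orbit s w"
proof
  show "set (vertex_word w) \<subseteq> orbit s w"
    unfolding vertex_word_def orbit_altdef by (auto simp del: funpow.simps)
  show "orbit s w \<subseteq> set (vertex_word w)"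
  proof
    fix y assume "y \<in> orbit s w"
    then obtain n where n: "n < vertex_degree w" "y = (s ^^ n) w"
      using orbit_conv_funpow_dist1[OF self_in_orbit] unfolding vertex_degree_def by auto
    show "y \<in> set (vertex_word w)"
    proof (cases n)
      case 0
      then have "y = last (vertex_word w)" using n last_vertex_word by simp
      then show ?thesis using vertex_word_ne by simp
    next
      case (Suc k)
      then show ?thesis using n unfolding vertex_word_def by (force simp del: funpow.simps)
    qed
  qed
qed

lemma cyclic_walk_vertex_word: "cyclic_walk s (vertex_word w)"
  unfolding cyclic_walk_def
proof (intro allI impI)
  fix j assume j: "j < length (vertex_word w)"
  show "s (vertex_word w ! j) = vertex_word w ! (Suc j mod length (vertex_word w))"
  proof (cases "Suc j < length (vertex_word w)")
    case True
    then show ?thesis using vertex_word_step by simp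
  next
    case False
    then have "j = length (vertex_word w) - 1" "Suc j = length (vertex_word w)" using j by simp_all
    then have "vertex_word w ! j = last (vertex_word w)" "Suc j mod length (vertex_word w) = 0"
      by (simp_all add: last_conv_nth vertex_word_ne)
    then show ?thesis
      using last_vertex_word hd_vertex_word vertex_word_ne by (simp add: hd_conv_nth)
  qed
qed

definition tree_succ :: "nat set \<Rightarrow> nat \<Rightarrow> nat" where
  "tree_succ T z = (if z \<in> T then s (a z) else s z)"

text \<open>\<open>L\<close> is the boundary walk of a plane tree whose vertices are the vertices of the darts in
  \<open>W\<close> and whose \<open>card W - 1\<close> edges are the pairs \<open>{z, a z}\<close> with \<open>z \<in> T\<close>; all other darts at these
  vertices are pendant half-edges. As the tree is plane, its edges do not cross along the walk.\<close>

definition tree_walk :: "nat list \<Rightarrow> nat set \<Rightarrow> nat set \<Rightarrow> bool" where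
  "tree_walk L T W \<longleftrightarrow> distinct L \<and> set L \<subseteq> {..<D} \<and> L \<noteq> [] \<and>
     T \<subseteq> set L \<and> (\<forall>z\<in>T. a z \<in> T) \<and> cyclic_walk (tree_succ T) L \<and> noncrossing_walk a T L \<and>
     W \<subseteq> set L \<and> set L = \<Union>(orbit s ` W) \<and> inj_on (orbit s) W \<and> card T + 2 = 2 * card W"

lemma tree_walk_vertex_word:
  assumes "w < D" shows "tree_walk (vertex_word w) {} {w}"
proof -
  have "tree_succ {} = s" unfolding tree_succ_def by auto
  then show ?thesis
    using distinct_vertex_word set_vertex_word orbit_subset_darts[OF assms] vertex_word_ne[of w]
      self_in_orbit[of w] cyclic_walk_vertex_word[of w]
    unfolding tree_walk_def noncrossing_walk_def by simp
qed

lemma tree_walk_orbit_subset: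
  assumes "tree_walk L T W" and "z \<in> set L" shows "orbit s z \<subseteq> set L"
proof -
  have L: "set L = \<Union>(orbit s ` W)" using assms(1) unfolding tree_walk_def by blast
  then obtain w where "w \<in> W" "z \<in> orbit s w" using assms(2) by blast
  then show ?thesis using orbit_eq L by blast
qed

lemma vertex_word_disjoint:
  assumes "tree_walk L T W" and "w \<notin> set L"
  shows "set (vertex_word w) \<inter> set L = {}"
proof (rule ccontr)
  assume "set (vertex_word w) \<inter> set L \<noteq> {}"
  then obtain y where "y \<in> orbit s w" "y \<in> set L" unfolding set_vertex_word by blast
  then have "orbit s w \<subseteq> set L" using tree_walk_orbit_subset[OF assms(1)] orbit_eq by metis
  then show False using assms(2) self_in_orbit by blast
qed

lemma cyclic_walk_tree_succ_extend:
  assumes walk: "cyclic_walk (tree_succ T) L" and i: "i < length L" and "distinct L"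
    and TL: "T \<subseteq> set L" and xT: "L ! i \<notin> T" and VL: "set (vertex_word w) \<inter> set L = {}"
    and pair: "a (L ! i) = w" "a w = L ! i"
  shows "cyclic_walk (tree_succ (insert (L ! i) (insert w T))) (insert_after i (vertex_word w) L)"
proof (rule cyclic_walk_insert_after[OF walk i vertex_word_ne])
  let ?V = "vertex_word w" and ?T = "insert (L ! i) (insert w T)"
  have xL: "L ! i \<in> set L" using i by simp
  have "w \<in> set ?V" using last_in_set[OF vertex_word_ne] unfolding last_vertex_word .
  then have wL: "w \<notin> set L" using VL by blast
  have not_T: "?V ! k \<notin> ?T" if "Suc k < length ?V" for k
  proof -
    have "?V ! k \<noteq> last ?V" using that distinct_vertex_word vertex_word_ne
      by (simp add: last_conv_nth nth_eq_iff_index_eq)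
    moreover have "?V ! k \<notin> set L" using that VL nth_mem[of k ?V] by force
    ultimately show ?thesis using TL xL unfolding last_vertex_word by auto
  qed
  show "tree_succ ?T (L ! i) = hd ?V" unfolding tree_succ_def pair hd_vertex_word by simp
  show "tree_succ ?T (last ?V) = tree_succ T (L ! i)"
    using xT pair unfolding tree_succ_def last_vertex_word by simp
  show "\<forall>k. Suc k < length ?V \<longrightarrow> tree_succ ?T (?V ! k) = ?V ! Suc k"
    using not_T vertex_word_step unfolding tree_succ_def by simp
  show "\<forall>j<length L. j \<noteq> i \<longrightarrow> tree_succ ?T (L ! j) = tree_succ T (L ! j)"
  proof (intro allI impI)
    fix j assume "j < length L" "j \<noteq> i"
    then have "L ! j \<noteq> L ! i" "L ! j \<noteq> w"
      using \<open>distinct L\<close> i wL by (auto simp: nth_eq_iff_index_eq)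
    then show "tree_succ ?T (L ! j) = tree_succ T (L ! j)" unfolding tree_succ_def by simp
  qed
qed

lemma tree_walk_extend:
  assumes tw: "tree_walk L T W" and i: "i < length L" and out: "a (L ! i) \<notin> set L"
  defines "x \<equiv> L ! i" and "w \<equiv> a (L ! i)"
  shows "tree_walk (insert_after i (vertex_word w) L) (insert x (insert w T)) (insert w W)"
proof -
  let ?V = "vertex_word w" and ?T = "insert x (insert w T)"
  have dL: "distinct L" and LD: "set L \<subseteq> {..<D}" and TL: "T \<subseteq> set L" and Ta: "\<forall>z\<in>T. a z \<in> T"
    and walk: "cyclic_walk (tree_succ T) L" and nc: "noncrossing_walk a T L"
    and WL: "W \<subseteq> set L" and LW: "set L = \<Union>(orbit s ` W)" and inj: "inj_on (orbit s) W"
    and card: "card T + 2 = 2 * card W"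
    using tw unfolding tree_walk_def by auto
  have xL: "x \<in> set L" and wL: "w \<notin> set L" using i out unfolding x_def w_def by auto
  have xT: "x \<notin> T" using Ta TL wL unfolding w_def x_def by auto
  have wD: "w < D" and aw: "a w = x" using xL LD a_less a_fpf_involution unfolding w_def x_def by auto
  have VL: "set ?V \<inter> set L = {}" using vertex_word_disjoint[OF tw wL] .
  have d': "distinct (insert_after i ?V L)"
    using distinct_insert_after[OF dL distinct_vertex_word VL] .
  have walk': "cyclic_walk (tree_succ ?T) (insert_after i ?V L)"
    using cyclic_walk_tree_succ_extend[OF walk i dL TL _ VL] xT aw unfolding x_def w_def by simp
  have nc': "noncrossing_walk a ?T (insert_after i ?V L)"
    using noncrossing_walk_insert_after[OF nc i dL d' TL Ta xT[unfolded x_def] vertex_word_ne]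
      aw last_vertex_word unfolding x_def w_def by simp
  have set': "set (insert_after i ?V L) = set L \<union> orbit s w"
    unfolding set_insert_after set_vertex_word ..
  have w: "w \<in> orbit s w" by (rule self_in_orbit)
  have inj': "inj_on (orbit s) (insert w W)"
  proof -
    have "orbit s w \<notin> orbit s ` W" using LW wL self_in_orbit by blast
    then show ?thesis using inj by auto
  qed
  have card': "card ?T + 2 = 2 * card (insert w W)"
  proof -
    have "finite T" "finite W" using TL WL finite_subset by blast+
    moreover have "w \<notin> T" "w \<notin> W" "x \<noteq> w" using TL WL wL xL by auto
    ultimately show ?thesis using card xT by simp
  qed
  have "?T \<subseteq> set (insert_after i ?V L)" using set' TL xL w by auto
  moreover have "\<forall>z\<in>?T. a z \<in> ?T" using Ta aw unfolding w_def x_def by auto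
  moreover have "set (insert_after i ?V L) \<subseteq> {..<D}" using set' LD orbit_subset_darts[OF wD] by auto
  moreover have "insert w W \<subseteq> set (insert_after i ?V L)" using set' WL w by auto
  moreover have "set (insert_after i ?V L) = \<Union>(orbit s ` insert w W)" using set' LW by auto
  ultimately show ?thesis unfolding tree_walk_def using d' walk' nc' inj' card' by auto
qed

lemma length_tree_walk_le:
  assumes "tree_walk L T W" shows "length L \<le> D"
proof -
  have "distinct L" "set L \<subseteq> {..<D}" using assms unfolding tree_walk_def by blast+
  then show ?thesis using card_mono[of "{..<D}" "set L"] distinct_card[of L] by simp
qed

lemma tree_walk_spanning:
  assumes tw: "tree_walk L T W" and closed: "\<forall>x\<in>set L. a x \<in> set L"
  shows "set L = {..<D}"
proof
  show "set L \<subseteq> {..<D}" using tw unfolding tree_walk_def by blast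
  have "L \<noteq> []" using tw unfolding tree_walk_def by blast
  then obtain x0 where x0: "x0 \<in> set L" by fastforce
  show "{..<D} \<subseteq> set L"
  proof
    fix y assume "y \<in> {..<D}"
    moreover have "x0 \<in> {..<D}" using x0 \<open>set L \<subseteq> {..<D}\<close> by blast
    ultimately have "(x0, y) \<in> ({(z, s z) | z. z \<in> {..<D}} \<union> {(z, a z) | z. z \<in> {..<D}})\<^sup>*"
      using connected by simp
    then show "y \<in> set L"
    proof (induction rule: rtrancl_induct)
      case (step u v)
      then have "v = s u \<or> v = a u" by blast
      moreover have "s u \<in> set L" using tree_walk_orbit_subset[OF tw step.IH] orbit.base[of s u] by blast
      ultimately show ?case using closed step.IH by auto
    qed (rule x0)
  qed
qed

lemma exists_spanning_tree_walk:
  assumes "0 < D" shows "\<exists>L T W. tree_walk L T W \<and> set L = {..<D}"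
proof -
  have "\<exists>L' T' W'. tree_walk L' T' W' \<and> set L' = {..<D}" if "tree_walk L T W" for L T W
    using that
  proof (induction "D - length L" arbitrary: L T W rule: less_induct)
    case less
    show ?case
    proof (cases "\<forall>x\<in>set L. a x \<in> set L")
      case True
      then show ?thesis using tree_walk_spanning[OF less.prems] less.prems by blast
    next
      case False
      then obtain i where i: "i < length L" "a (L ! i) \<notin> set L" by (metis in_set_conv_nth)
      let ?L = "insert_after i (vertex_word (a (L ! i))) L"
      note ext = tree_walk_extend[OF less.prems i]
      have "length L < length ?L" using length_insert_after[OF i(1)] vertex_word_ne by simp
      then have "D - length ?L < D - length L" using length_tree_walk_le[OF ext] by linarith
      then show ?thesis by (rule less.hyps[OF _ ext])
    qed
  qed
  then show ?thesis using tree_walk_vertex_word[of 0] assms by simp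
qed

end

text \<open>The inverse of the encoding: along the boundary walk, a dart off the tree is followed in its
  rotation by the next dart of the walk, and a tree dart by the dart following its partner.\<close>

fun decode_map :: "nat \<Rightarrow> (nat \<Rightarrow> nat) \<times> nat set \<Rightarrow> rmap" where
  "decode_map D (\<alpha>, P) =
     (D, (\<lambda>i. if i < D then (if i \<in> P then Suc i else Suc (\<alpha> i)) mod D else i), \<alpha>)"

locale spanning_tree_walk = rotation_system +
  fixes L :: "nat list" and T W :: "nat set"
  assumes tree_walk: "tree_walk L T W" and spanning: "set L = {..<D}"
begin

definition partner_pos :: "nat \<Rightarrow> nat" where
  "partner_pos i = (if i < D then index_of L (a (L ! i)) else i)"

definition off_tree_pos :: "nat set" where
  "off_tree_pos = {i. i < D \<and> L ! i \<notin> T}"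

lemma distinct_walk: "distinct L"
  using tree_walk unfolding tree_walk_def by blast

lemma length_walk: "length L = D"
  using distinct_card[OF distinct_walk] spanning by simp

lemma nth_walk_less: "i < D \<Longrightarrow> L ! i < D"
  using spanning length_walk nth_mem by fastforce

lemma index_of_walk_less: "z < D \<Longrightarrow> index_of L z < D"
  and nth_index_of_walk: "z < D \<Longrightarrow> L ! index_of L z = z"
  using index_of_less[of z L] nth_index_of[of z L] distinct_walk spanning length_walk by auto

lemma index_of_nth_walk: "i < D \<Longrightarrow> index_of L (L ! i) = i"
  using index_of_nth[OF distinct_walk] length_walk by simp

lemma nth_partner_pos: "i < D \<Longrightarrow> L ! partner_pos i = a (L ! i)"
  unfolding partner_pos_def using nth_index_of_walk a_less nth_walk_less by simp

lemma partner_pos_less: "i < D \<Longrightarrow> partner_pos i < D"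
  unfolding partner_pos_def using index_of_walk_less a_less nth_walk_less by simp

lemma fpf_involution_partner_pos: "fpf_involution_on {..<D} partner_pos"
  unfolding fpf_involution_on_def
proof (intro ballI conjI)
  fix i assume "i \<in> {..<D}"
  then have i: "i < D" by simp
  show "partner_pos i \<in> {..<D}" using partner_pos_less[OF i] by simp
  show "partner_pos i \<noteq> i"
  proof
    assume "partner_pos i = i"
    then have "a (L ! i) = L ! i" using nth_partner_pos[OF i] by simp
    then show False using a_fpf_involution nth_walk_less[OF i] by auto
  qed
  have "L ! partner_pos (partner_pos i) = L ! i"
    using nth_partner_pos partner_pos_less[OF i] i a_fpf_involution nth_walk_less by simp
  then show "partner_pos (partner_pos i) = i"
    using index_of_nth_walk partner_pos_less[OF i] i by (metis partner_pos_less)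
qed

lemma noncrossing_partner_pos: "noncrossing_on ({..<D} - off_tree_pos) partner_pos"
  unfolding noncrossing_on_def
proof (intro ballI impI)
  fix i j assume "i \<in> {..<D} - off_tree_pos" "j \<in> {..<D} - off_tree_pos"
    and ij: "i < j \<and> j < partner_pos i"
  then have i: "i < D" "L ! i \<in> T" and j: "j < D" "L ! j \<in> T" unfolding off_tree_pos_def by auto
  have "noncrossing_walk a T L" using tree_walk unfolding tree_walk_def by blast
  moreover have "index_of L (L ! i) < index_of L (L ! j) \<and>
      index_of L (L ! j) < index_of L (a (L ! i))"
    using ij i j index_of_nth_walk unfolding partner_pos_def by simp
  ultimately have "index_of L (L ! i) < index_of L (a (L ! j)) \<and>
      index_of L (a (L ! j)) < index_of L (a (L ! i))"
    using i j unfolding noncrossing_walk_def by blast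
  then show "i < partner_pos j \<and> partner_pos j < partner_pos i"
    using i j index_of_nth_walk unfolding partner_pos_def by simp
qed

lemma card_off_tree_pos: "card off_tree_pos = D - card T"
proof -
  have TL: "T \<subseteq> {..<D}" using tree_walk spanning unfolding tree_walk_def by blast
  have "bij_betw (nth L) off_tree_pos ({..<D} - T)"
  proof (rule bij_betw_imageI)
    show "inj_on (nth L) off_tree_pos"
      using inj_on_nth[OF distinct_walk] length_walk unfolding off_tree_pos_def by simp
    show "nth L ` off_tree_pos = {..<D} - T"
    proof
      show "nth L ` off_tree_pos \<subseteq> {..<D} - T" unfolding off_tree_pos_def using nth_walk_less by auto
      show "{..<D} - T \<subseteq> nth L ` off_tree_pos"
      proof
        fix z assume z: "z \<in> {..<D} - T"
        then have "index_of L z \<in> off_tree_pos"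
          using nth_index_of_walk index_of_walk_less unfolding off_tree_pos_def by auto
        then show "z \<in> nth L ` off_tree_pos" using nth_index_of_walk z by (intro image_eqI) auto
      qed
    qed
  qed
  then show ?thesis
    using bij_betw_same_card TL by (metis card_Diff_subset card_lessThan finite_lessThan finite_subset)
qed

lemma code_mem_chord_codes: "(partner_pos, off_tree_pos) \<in> chord_codes D (D - card T)"
proof -
  have "\<forall>i\<in>off_tree_pos. partner_pos i \<in> off_tree_pos"
  proof
    fix i assume "i \<in> off_tree_pos"
    then have i: "i < D" "L ! i \<notin> T" unfolding off_tree_pos_def by auto
    have "a (L ! i) \<notin> T"
      using tree_walk i a_fpf_involution nth_walk_less unfolding tree_walk_def by (metis lessThan_iff)
    then show "partner_pos i \<in> off_tree_pos"
      using nth_partner_pos[OF i(1)] partner_pos_less[OF i(1)] unfolding off_tree_pos_def by simp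
  qed
  then show ?thesis
    unfolding chord_codes_def
    using card_off_tree_pos fpf_involution_partner_pos noncrossing_partner_pos
    by (auto simp: off_tree_pos_def partner_pos_def)
qed

lemma walk_step: "j < D \<Longrightarrow> tree_succ T (L ! j) = L ! (Suc j mod D)"
  using tree_walk length_walk unfolding tree_walk_def cyclic_walk_def by simp

definition relabel :: "nat \<Rightarrow> nat" where
  "relabel z = (if z < D then index_of L z else z)"

lemma relabel_permutes: "relabel permutes {..<D}"
proof (rule bij_imp_permutes)
  show "bij_betw relabel {..<D} {..<D}"
  proof (rule bij_betw_imageI)
    show "inj_on relabel {..<D}"
      unfolding relabel_def using nth_index_of_walk by (intro inj_onI) (metis lessThan_iff)
    show "relabel ` {..<D} = {..<D}"
    proof
      show "relabel ` {..<D} \<subseteq> {..<D}" unfolding relabel_def using index_of_walk_less by auto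
      show "{..<D} \<subseteq> relabel ` {..<D}"
      proof
        fix i assume "i \<in> {..<D}"
        then have "relabel (L ! i) = i" "L ! i \<in> {..<D}"
          unfolding relabel_def using index_of_nth_walk nth_walk_less by auto
        then show "i \<in> relabel ` {..<D}" by (metis image_eqI)
      qed
    qed
  qed
qed (simp add: relabel_def)

lemma relabel_a: "x < D \<Longrightarrow> relabel (a x) = partner_pos (relabel x)"
  unfolding relabel_def partner_pos_def using a_less index_of_walk_less nth_index_of_walk by simp

lemma relabel_s:
  assumes x: "x < D"
  shows "relabel (s x) =
    (if relabel x \<in> off_tree_pos then Suc (relabel x) else Suc (partner_pos (relabel x))) mod D"
proof -
  define i where "i = index_of L x"
  have i: "i < D" "L ! i = x" "relabel x = i"
    using x index_of_walk_less nth_index_of_walk unfolding i_def relabel_def by auto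
  define k where "k = Suc (if x \<notin> T then i else partner_pos i) mod D"
  have "s x = L ! k"
  proof (cases "x \<in> T")
    case False
    then show ?thesis using walk_step[OF i(1)] i unfolding tree_succ_def k_def by simp
  next
    case True
    have aT: "a x \<in> T" and aax: "a (a x) = x"
      using True tree_walk x a_fpf_involution unfolding tree_walk_def by auto
    then have "tree_succ T (L ! partner_pos i) = s x"
      using nth_partner_pos[OF i(1)] i unfolding tree_succ_def by simp
    then show ?thesis using walk_step[OF partner_pos_less[OF i(1)]] True unfolding k_def by simp
  qed
  moreover have "k < D" unfolding k_def using x by simp
  ultimately have "relabel (s x) = k"
    unfolding relabel_def using index_of_nth_walk nth_walk_less by simp
  then show ?thesis using i unfolding off_tree_pos_def k_def by simp
qed

lemma map_iso_decode_map: "map_iso (D, s, a) (decode_map D (partner_pos, off_tree_pos))"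
  (is "map_iso ?M ?N")
  unfolding map_iso_def
proof (intro conjI exI[of _ relabel])
  show "relabel permutes darts ?M" using relabel_permutes by (simp add: darts_def)
  show "\<forall>x\<in>darts ?M. relabel (einv ?M x) = einv ?N (relabel x)"
    using relabel_a by (simp add: darts_def einv_def)
  have "relabel x < D" if "x < D" for x using permutes_in_image[OF relabel_permutes, of x] that by simp
  then show "(\<forall>x\<in>darts ?M. relabel (vrot ?M x) = vrot ?N (relabel x)) \<or>
    (\<forall>x\<in>darts ?M. vrot ?N (relabel (vrot ?M x)) = relabel x)"
    using relabel_s by (simp add: darts_def vrot_def)
qed simp

lemma num_orbits_eq_card_W: "num_orbits {..<D} s = card W"
proof -
  have W: "W \<subseteq> {..<D}" "{..<D} = \<Union>(orbit s ` W)" "inj_on (orbit s) W"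
    using tree_walk spanning unfolding tree_walk_def by auto
  have "orbit s ` {..<D} = orbit s ` W"
  proof
    show "orbit s ` W \<subseteq> orbit s ` {..<D}" using W by auto
    show "orbit s ` {..<D} \<subseteq> orbit s ` W" using W(2) orbit_eq by auto
  qed
  then show ?thesis
    using num_orbits_eq_card_orbits[OF s_permutes] card_image[OF W(3)] by simp
qed

end

lemma unicellular_map_encoding:
  assumes "M \<in> unicellular_maps n h"
  shows "\<exists>c\<in>chord_codes (2 * (n + h - 1)) (2 * h). map_iso M (decode_map (2 * (n + h - 1)) c)"
proof -
  obtain D s a where M: "M = (D, s, a)" by (cases M)
  have rmap: "is_rmap M" and nv: "num_vertices M = n" and nf: "num_faces M = 1"
    and eg: "euler_genus M = int h" using assms unfolding unicellular_maps_def by auto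
  have dM: "darts M = {..<D}" unfolding darts_def M by simp
  have euler: "D div 2 + 1 = n + h"
    using eg nv nf unfolding euler_genus_def num_edges_def M by simp
  show ?thesis
  proof (cases "D = 0")
    case True
    then have "n = 1" "h = 0" using nv euler unfolding num_vertices_def M by auto
    moreover have "(id, {}) \<in> chord_codes 0 0"
      unfolding chord_codes_def fpf_involution_on_def noncrossing_on_def by simp
    moreover have "map_iso M (decode_map 0 (id, {}))"
      unfolding map_iso_def using True dM M by (intro conjI exI[of _ id]) auto
    ultimately show ?thesis by force
  next
    case False
    interpret rotation_system D s a
      using rmap unfolding M is_rmap_def darts_def vrot_def einv_def by unfold_locales simp_all
    obtain L T W where tw: "tree_walk L T W" and full: "set L = {..<D}"
      using exists_spanning_tree_walk False by blast
    interpret spanning_tree_walk D s a L T W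
      using tw full by unfold_locales
    have "n = card W"
      using nv False num_orbits_eq_card_W unfolding num_vertices_def M darts_def vrot_def by simp
    moreover have "card T + 2 = 2 * card W" using tw unfolding tree_walk_def by blast
    moreover have "even D"
      using even_card_fpf_involution_on[of "{..<D}" a] a_fpf_involution a_less
      unfolding fpf_involution_on_def by simp
    ultimately have D: "D = 2 * (n + h - 1)" and "D - card T = 2 * h" using euler by auto
    then have "(partner_pos, off_tree_pos) \<in> chord_codes D (2 * h)" using code_mem_chord_codes by simp
    then show ?thesis using map_iso_decode_map unfolding M D[symmetric] by blast
  qed
qed

theorem lemma9:
  fixes n h :: nat
  assumes "n \<ge> 1" and "even h"
  shows "num_unicellular_maps n h \<le> 2 ^ (4 * n + 3 * h) * h ^ h"
proof -
  define D where "D = 2 * (n + h - 1)"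
  have "\<forall>M\<in>unicellular_maps n h. \<exists>c\<in>chord_codes D (2 * h). map_iso M (decode_map D c)"
    using unicellular_map_encoding unfolding D_def by blast
  then have "num_unicellular_maps n h \<le> card (chord_codes D (2 * h))"
    by (rule num_unicellular_maps_le_card[OF finite_chord_codes])
  also have "\<dots> \<le> 2 ^ D * 2 ^ (D - 2 * h) * (2 * h) ^ (2 * h div 2)"
    by (rule card_chord_codes_le)
  also have "\<dots> = 2 ^ (D + (D - 2 * h) + h) * h ^ h"
    by (simp add: power_add power_mult_distrib)
  also have "\<dots> \<le> 2 ^ (4 * n + 3 * h) * h ^ h"
    unfolding D_def by (intro mult_right_mono power_increasing) auto
  finally show ?thesis .
qed

end
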